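(* Let $G$ be a finite simple graph, and let $V_0 \subseteq V(G)$ be reducible using $\mathcal{S}$ and $X$. Let $G' = (G - X) - V_0$. If $\tau(G') \leq 2\nu(G')$, then $\tau(G) \leq 2\nu(G)$.
   Context: $\nu(G)$ is the maximum number of pairwise edge-disjoint triangles in $G$; $\tau(G)$ is the minimum size of an edge set $Y$ with $G-Y$ triangle-free. For a set $\mathcal{S}$ of triangles, an $\mathcal{S}$-edge is an edge of some triangle in $\mathcal{S}$. A nonempty set $V_0 \subseteq V(G)$ is reducible using $\mathcal{S}$ and $X$, where $\mathcal{S}$ is a set of pairwise edge-disjoint triangles of $G$ and $X \subseteq E(G)$, if (i) $|X| \leq 2|\mathcal{S}|$; (ii) $G - X$ has no triangle containing a vertex of $V_0$; and (iii) $X$ contains every $\mathcal{S}$-edge whose endpoints both lie outside $V_0$. *)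

theory Defs
  imports Main
begin

definition simple_graph :: "'a set \<Rightarrow> 'a set set \<Rightarrow> bool" where
  "simple_graph V E \<longleftrightarrow> finite V \<and> (\<forall>e\<in>E. e \<subseteq> V \<and> card e = 2)"

definition triangles :: "'a set set \<Rightarrow> 'a set set" where
  "triangles E = {T. card T = 3 \<and> (\<forall>x\<in>T. \<forall>y\<in>T. x \<noteq> y \<longrightarrow> {x, y} \<in> E)}"

definition tri_edges :: "'a set \<Rightarrow> 'a set set" where
  "tri_edges T = {e. e \<subseteq> T \<and> card e = 2}"

definition S_edges :: "'a set set \<Rightarrow> 'a set set" where
  "S_edges S = (\<Union>T\<in>S. tri_edges T)"

definition tri_packing :: "'a set set \<Rightarrow> 'a set set \<Rightarrow> bool" where
  "tri_packing E S \<longleftrightarrow> S \<subseteq> triangles E \<and>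
     (\<forall>T\<in>S. \<forall>T'\<in>S. T \<noteq> T' \<longrightarrow> tri_edges T \<inter> tri_edges T' = {})"

definition nu :: "'a set set \<Rightarrow> nat" where
  "nu E = Max {card S | S. tri_packing E S}"

definition tau :: "'a set set \<Rightarrow> nat" where
  "tau E = Min {card Y | Y. Y \<subseteq> E \<and> triangles (E - Y) = {}}"

definition del_vertices_E :: "'a set set \<Rightarrow> 'a set \<Rightarrow> 'a set set" where
  "del_vertices_E E W = {e \<in> E. e \<inter> W = {}}"

definition reducible :: "'a set \<Rightarrow> 'a set set \<Rightarrow> 'a set \<Rightarrow> 'a set set \<Rightarrow> 'a set set \<Rightarrow> bool" where
  "reducible V E V0 S X \<longleftrightarrow>
     V0 \<noteq> {} \<and> V0 \<subseteq> V \<and> tri_packing E S \<and> X \<subseteq> E \<and>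
     card X \<le> 2 * card S \<and>
     (\<forall>T\<in>triangles (E - X). T \<inter> V0 = {}) \<and>
     (\<forall>e\<in>S_edges S. e \<inter> V0 = {} \<longrightarrow> e \<in> X)"

end

theory Submission
  imports Defs
begin

text \<open>An optimal cover \<open>Y'\<close> of \<open>G'\<close> together with \<open>X\<close> covers \<open>G\<close>: a triangle of \<open>G - X\<close>
  avoids \<open>V\<^sub>0\<close>, so it is a triangle of \<open>G'\<close> and meets \<open>Y'\<close>. Conversely, a maximum packing
  of \<open>G'\<close> is edge-disjoint from \<open>\<S>\<close>, because every \<open>\<S>\<close>-edge either touches \<open>V\<^sub>0\<close> or lies
  in \<open>X\<close>, and \<open>G'\<close> has neither kind of edge. Hence
  \<open>\<tau>(G) \<le> |X| + \<tau>(G') \<le> 2|\<S>| + 2\<nu>(G') \<le> 2\<nu>(G)\<close>.\<close>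

lemma triangles_iff_tri_edges: "T \<in> triangles E \<longleftrightarrow> card T = 3 \<and> tri_edges T \<subseteq> E"
proof
  assume T: "T \<in> triangles E"
  have "e \<in> E" if "e \<in> tri_edges T" for e
  proof -
    from that obtain x y where "e = {x, y}" "x \<noteq> y" "x \<in> T" "y \<in> T"
      by (auto simp: tri_edges_def card_2_iff)
    with T show ?thesis by (auto simp: triangles_def)
  qed
  with T show "card T = 3 \<and> tri_edges T \<subseteq> E" by (auto simp: triangles_def)
next
  assume "card T = 3 \<and> tri_edges T \<subseteq> E"
  then show "T \<in> triangles E"
    by (auto simp: triangles_def tri_edges_def subset_iff)
qed

lemma triangles_mono: "E \<subseteq> E' \<Longrightarrow> triangles E \<subseteq> triangles E'"
  by (auto simp: triangles_def)

lemma tri_edges_nonempty: "card T = 3 \<Longrightarrow> tri_edges T \<noteq> {}"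
proof -
  assume "card T = 3"
  then obtain a b c where "T = {a, b, c}" "a \<noteq> b" by (metis card_3_iff)
  then have "{a, b} \<in> tri_edges T" by (auto simp: tri_edges_def)
  then show ?thesis by auto
qed

lemma triangles_empty: "triangles {} = {}"
  using tri_edges_nonempty triangles_iff_tri_edges by blast

lemma triangle_subset_vertices:
  assumes "simple_graph V E" and "T \<in> triangles E"
  shows "T \<subseteq> V"
proof
  fix x assume x: "x \<in> T"
  have "T \<noteq> {x}" using assms(2) by (auto simp: triangles_def)
  with x obtain y where "y \<in> T" "y \<noteq> x" by blast
  with assms x have "{x, y} \<in> E" by (auto simp: triangles_def)
  with assms(1) show "x \<in> V" by (auto simp: simple_graph_def)
qed

lemma simple_graph_finite_edges: "simple_graph V E \<Longrightarrow> finite E"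
  unfolding simple_graph_def by (metis PowI finite_Pow_iff finite_subset subsetI)

lemma simple_graph_finite_triangles: "simple_graph V E \<Longrightarrow> finite (triangles E)"
  using triangle_subset_vertices
  by (metis Pow_iff finite_Pow_iff finite_subset simple_graph_def subsetI)

lemma simple_graph_subset: "simple_graph V E \<Longrightarrow> E' \<subseteq> E \<Longrightarrow> simple_graph V E'"
  by (auto simp: simple_graph_def)

lemma finite_cover_sizes: "finite E \<Longrightarrow> finite {card Y | Y. Y \<subseteq> E \<and> triangles (E - Y) = {}}"
  by (simp add: finite_image_set2)

lemma tau_le:
  assumes "finite E" and "Y \<subseteq> E" and "triangles (E - Y) = {}"
  shows "tau E \<le> card Y"
  unfolding tau_def using assms by (intro Min_le finite_cover_sizes) blast+

lemma tau_attained: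
  assumes "finite E"
  obtains Y where "Y \<subseteq> E" "triangles (E - Y) = {}" "card Y = tau E"
proof -
  let ?C = "{card Y | Y. Y \<subseteq> E \<and> triangles (E - Y) = {}}"
  have "card E \<in> ?C" using triangles_empty by (intro CollectI exI[of _ E]) simp
  then have "tau E \<in> ?C"
    unfolding tau_def by (intro Min_in finite_cover_sizes[OF assms]) blast
  then obtain Y where "Y \<subseteq> E" "triangles (E - Y) = {}" "tau E = card Y" by auto
  with that show ?thesis by simp
qed

lemma finite_packing_sizes:
  assumes "finite (triangles E)"
  shows "finite {card S | S. tri_packing E S}"
proof (rule finite_subset)
  show "{card S | S. tri_packing E S} \<subseteq> {..card (triangles E)}"
    using assms by (auto simp: tri_packing_def intro: card_mono)
qed simp

lemma nu_ge:
  assumes "finite (triangles E)" and "tri_packing E S"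
  shows "card S \<le> nu E"
  unfolding nu_def using assms(2) by (blast intro: Max_ge finite_packing_sizes[OF assms(1)])

lemma nu_attained:
  assumes "finite (triangles E)"
  obtains S where "tri_packing E S" "card S = nu E"
proof -
  let ?C = "{card S | S. tri_packing E S}"
  have "card {} \<in> ?C" by (intro CollectI exI[of _ "{}"]) (simp add: tri_packing_def)
  then have "nu E \<in> ?C"
    unfolding nu_def by (intro Max_in finite_packing_sizes[OF assms]) blast
  then obtain S where "tri_packing E S" "nu E = card S" by auto
  with that show ?thesis by simp
qed

lemma tri_packing_mono:
  assumes "E \<subseteq> E'" and "tri_packing E S"
  shows "tri_packing E' S"
proof -
  from assms(2) have "S \<subseteq> triangles E" by (simp add: tri_packing_def)
  also have "\<dots> \<subseteq> triangles E'" using assms(1) by (rule triangles_mono)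
  finally show ?thesis using assms(2) by (simp add: tri_packing_def)
qed

lemma tri_packing_finite: "finite (triangles E) \<Longrightarrow> tri_packing E S \<Longrightarrow> finite S"
  unfolding tri_packing_def by (metis finite_subset)

lemma tri_packing_S_edges_subset:
  assumes "tri_packing E S"
  shows "S_edges S \<subseteq> E"
proof
  fix e assume "e \<in> S_edges S"
  then obtain T where "T \<in> S" and eT: "e \<in> tri_edges T" by (auto simp: S_edges_def)
  with assms have "T \<in> triangles E" by (auto simp: tri_packing_def)
  with eT show "e \<in> E" by (auto simp: triangles_iff_tri_edges)
qed

lemma tri_packing_Un:
  assumes "tri_packing E S" and "tri_packing E P" and "S_edges S \<inter> S_edges P = {}"
  shows "tri_packing E (S \<union> P)" and "S \<inter> P = {}"
proof -
  have disj: "tri_edges T \<inter> tri_edges T' = {}" if "T \<in> S" "T' \<in> P" for T T'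
    using assms(3) that by (auto simp: S_edges_def)
  show "tri_packing E (S \<union> P)"
    unfolding tri_packing_def
  proof (intro conjI ballI impI)
    show "S \<union> P \<subseteq> triangles E" using assms(1,2) by (simp add: tri_packing_def)
    fix T T' assume "T \<in> S \<union> P" "T' \<in> S \<union> P" "T \<noteq> T'"
    then show "tri_edges T \<inter> tri_edges T' = {}"
      using assms(1,2) disj[of T T'] disj[of T' T] unfolding tri_packing_def by blast
  qed
  show "S \<inter> P = {}"
  proof (intro equals0I)
    fix T assume T: "T \<in> S \<inter> P"
    with assms(1) have "card T = 3" by (auto simp: tri_packing_def triangles_def)
    then obtain e where "e \<in> tri_edges T" using tri_edges_nonempty by blast
    with disj[of T T] T show False by blast
  qed
qed

lemma reducible_cover:
  assumes "\<forall>T\<in>triangles (E - X). T \<inter> V0 = {}"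
    and "triangles (del_vertices_E (E - X) V0 - Y) = {}"
  shows "triangles (E - (X \<union> Y)) = {}"
proof (intro equals0I)
  fix T assume T: "T \<in> triangles (E - (X \<union> Y))"
  then have "T \<in> triangles (E - X)" using triangles_mono[of "E - (X \<union> Y)"] by blast
  with assms(1) have "T \<inter> V0 = {}" by blast
  then have "e \<inter> V0 = {}" if "e \<in> tri_edges T" for e
    using that by (auto simp: tri_edges_def)
  with T have "T \<in> triangles (del_vertices_E (E - X) V0 - Y)"
    by (auto simp: triangles_iff_tri_edges del_vertices_E_def)
  with assms(2) show False by blast
qed

lemma reducible_S_edges_disjoint:
  assumes "\<forall>e\<in>S_edges S. e \<inter> V0 = {} \<longrightarrow> e \<in> X"
    and "tri_packing (del_vertices_E (E - X) V0) P"
  shows "S_edges S \<inter> S_edges P = {}"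
proof (intro equals0I)
  fix e assume e: "e \<in> S_edges S \<inter> S_edges P"
  then have "e \<in> del_vertices_E (E - X) V0"
    using tri_packing_S_edges_subset[OF assms(2)] by blast
  then have "e \<notin> X" and "e \<inter> V0 = {}" by (auto simp: del_vertices_E_def)
  with assms(1) e show False by blast
qed

theorem lemma2p2:
  fixes V V0 :: "'a set" and E S X :: "'a set set"
  assumes "simple_graph V E"
    and "reducible V E V0 S X"
    and "tau (del_vertices_E (E - X) V0) \<le> 2 * nu (del_vertices_E (E - X) V0)"
  shows "tau E \<le> 2 * nu E"
proof -
  define E' where "E' = del_vertices_E (E - X) V0"
  have "E' \<subseteq> E" by (auto simp: E'_def del_vertices_E_def)
  then have G': "simple_graph V E'" using assms(1) simple_graph_subset by blast
  note red = assms(2)[unfolded reducible_def]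
  have finE: "finite E" and finT: "finite (triangles E)"
    using simple_graph_finite_edges[OF assms(1)] simple_graph_finite_triangles[OF assms(1)] .
  obtain Y where Y: "Y \<subseteq> E'" "triangles (E' - Y) = {}" "card Y = tau E'"
    using simple_graph_finite_edges[OF G'] by (rule tau_attained)
  obtain P where P: "tri_packing E' P" "card P = nu E'"
    using simple_graph_finite_triangles[OF G'] by (rule nu_attained)
  have SP: "tri_packing E S" "tri_packing E P" "S_edges S \<inter> S_edges P = {}"
    using red P(1) tri_packing_mono[OF \<open>E' \<subseteq> E\<close>]
      reducible_S_edges_disjoint[of S V0 X E P] unfolding E'_def by blast+
  have "tau E \<le> card (X \<union> Y)"
    using red Y \<open>E' \<subseteq> E\<close> reducible_cover[of E X V0 Y] finE by (intro tau_le) (auto simp: E'_def)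
  also have "\<dots> \<le> card X + card Y" by (rule card_Un_le)
  also have "\<dots> \<le> 2 * (card S + card P)" using red Y(3) P(2) assms(3) by (simp add: E'_def)
  also have "card S + card P = card (S \<union> P)"
    using card_Un_disjoint[OF tri_packing_finite[OF finT SP(1)] tri_packing_finite[OF finT SP(2)]
        tri_packing_Un(2)[OF SP]] by simp
  also have "\<dots> \<le> nu E"
    by (rule nu_ge[OF finT tri_packing_Un(1)[OF SP]])
  finally show ?thesis by simp
qed

end
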